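(* Let $n\in[0,\frac72]$, $\varepsilon>0$ and $h_\varepsilon(s):=\frac{s^{5-n}}{s^{4-n}+\varepsilon}$ for $s\ge0$. Then $$0\le h_\varepsilon(s)\le s\quad\text{and}\quad0\le h_\varepsilon'(s)\le5-n\qquad\text{for all }s\ge0,$$ and moreover $$|h_\varepsilon''(s)|\le2^{-\frac{7-2n}{2(4-n)}}(4-n)(5-n)\,\varepsilon^{\frac{1}{2(4-n)}}s^{-3/2}\qquad\text{for all }s>0.$$ *)

theory Defs
  imports "HOL-Analysis.Analysis"
begin

definition h_eps :: "real \<Rightarrow> real \<Rightarrow> real \<Rightarrow> real" where
  "h_eps n \<epsilon> s = s powr (5 - n) / (s powr (4 - n) + \<epsilon>)"

end

theory Submission
  imports Defs
begin

text \<open>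
  Write \<open>a = 4 - n\<close>, so that \<open>h\<^sub>\<epsilon>(s) = s\<^bsup>a+1\<^esup> / (s\<^sup>a + \<epsilon>)\<close>, and put \<open>u = s\<^sup>a\<close>.
  Then \<open>h\<^sub>\<epsilon>' = (u\<^sup>2 + (a+1)\<epsilon>u) / (u+\<epsilon>)\<^sup>2\<close>, which lies in \<open>[0, a+1]\<close>, and
  \<open>h\<^sub>\<epsilon>'' = \<epsilon>((1-a)u + (a+1)\<epsilon>) / (u+\<epsilon>)\<^sup>3 \<cdot> a s\<^bsup>a-1\<^esup>\<close>, whose modulus is at most
  \<open>a(a+1) \<epsilon> s\<^bsup>a-1\<^esup> / (u+\<epsilon>)\<^sup>2\<close>. With \<open>p = 1 + 1/(2a)\<close>, which lies in \<open>[1,2]\<close> because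
  \<open>n \<le> 7/2\<close>, one has \<open>s\<^bsup>a-1\<^esup> = u\<^sup>p s\<^bsup>-3/2\<^esup>\<close>, and the interpolation inequality
  \<open>u\<^sup>p \<epsilon>\<^bsup>2-p\<^esup> \<le> 2\<^bsup>p-2\<^esup> (u+\<epsilon>)\<^sup>2\<close> gives the claimed bound.
\<close>

definition reg_powr :: "real \<Rightarrow> real \<Rightarrow> real \<Rightarrow> real" where
  "reg_powr a e s = s powr (a + 1) / (s powr a + e)"

definition reg_powr_slope :: "real \<Rightarrow> real \<Rightarrow> real \<Rightarrow> real" where
  "reg_powr_slope a e u = (u\<^sup>2 + (a + 1) * e * u) / (u + e)\<^sup>2"

lemma h_eps_eq_reg_powr: "h_eps n e = reg_powr (4 - n) e"
  by (rule ext) (simp add: h_eps_def reg_powr_def)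

lemma reg_powr_bounds:
  fixes a e s :: real
  assumes "e > 0" "s \<ge> 0"
  shows "0 \<le> reg_powr a e s" "reg_powr a e s \<le> s"
proof -
  have "0 < s powr a + e"
    using assms by (simp add: add_nonneg_pos)
  moreover have "s powr (a + 1) = s powr a * s"
    using assms by (cases "s = 0") (simp_all add: powr_add)
  ultimately show "0 \<le> reg_powr a e s" "reg_powr a e s \<le> s"
    using assms by (simp_all add: reg_powr_def pos_divide_le_eq algebra_simps)
qed

lemma has_real_derivative_reg_powr:
  fixes a e s :: real
  assumes "e > 0" "s > 0"
  shows "(reg_powr a e has_real_derivative reg_powr_slope a e (s powr a)) (at s)"
proof -
  have pos: "s powr a + e > 0"
    using assms by (simp add: add_pos_pos)
  have quotient_rule: "(reg_powr a e has_real_derivative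
      ((a + 1) * s powr (a + 1 - 1) * (s powr a + e) - s powr (a + 1) * (a * s powr (a - 1) + 0))
        / ((s powr a + e) * (s powr a + e))) (at s)"
    unfolding reg_powr_def
    by (intro DERIV_divide has_real_derivative_powr DERIV_add DERIV_const)
       (use assms pos in auto)
  have "s powr (a + 1) = s powr a * s" "s powr (a - 1) = s powr a / s"
    using assms by (simp_all add: powr_add powr_diff)
  then have "((a + 1) * s powr (a + 1 - 1) * (s powr a + e) - s powr (a + 1) * (a * s powr (a - 1) + 0))
        / ((s powr a + e) * (s powr a + e)) = reg_powr_slope a e (s powr a)"
    using assms by (simp add: reg_powr_slope_def field_simps power2_eq_square)
  with quotient_rule show ?thesis
    by simp
qed

lemma has_real_derivative_reg_powr_at_0:
  fixes a e :: real
  assumes "a > 0" "e > 0"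
  shows "(reg_powr a e has_real_derivative 0) (at 0 within {0..})"
proof -
  have "((\<lambda>s. s powr a) \<longlongrightarrow> 0 powr a) (at 0 within {0..})"
    by (rule tendsto_powr'[OF tendsto_ident_at tendsto_const])
       (use assms in \<open>auto simp: eventually_at_filter\<close>)
  then have "((\<lambda>s. s powr a / (s powr a + e)) \<longlongrightarrow> 0 powr a / (0 powr a + e)) (at 0 within {0..})"
    using assms by (intro tendsto_divide tendsto_add tendsto_const) auto
  then have "((\<lambda>s. s powr a / (s powr a + e)) \<longlongrightarrow> 0) (at 0 within {0..})"
    by simp
  moreover have "\<forall>\<^sub>F s in at 0 within {0..}.
      s powr a / (s powr a + e) = (reg_powr a e s - reg_powr a e 0) / (s - 0)"
    by (auto simp: eventually_at_filter reg_powr_def powr_add)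
  ultimately show ?thesis
    unfolding has_field_derivative_iff by (rule Lim_transform_eventually)
qed

lemma reg_powr_slope_bounds:
  fixes a e u :: real
  assumes "a \<ge> 0" "e > 0" "u \<ge> 0"
  shows "0 \<le> reg_powr_slope a e u" "reg_powr_slope a e u \<le> a + 1"
proof -
  have "(a + 1) * (u + e)\<^sup>2 - (u\<^sup>2 + (a + 1) * e * u) = a * u\<^sup>2 + (a + 1) * e * u + (a + 1) * e\<^sup>2"
    by (simp add: power2_eq_square algebra_simps)
  moreover have "a * u\<^sup>2 + (a + 1) * e * u + (a + 1) * e\<^sup>2 \<ge> 0"
    using assms by simp
  ultimately have "u\<^sup>2 + (a + 1) * e * u \<le> (a + 1) * (u + e)\<^sup>2"
    by linarith
  then show "reg_powr_slope a e u \<le> a + 1"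
    using assms by (simp add: reg_powr_slope_def divide_le_eq)
  show "0 \<le> reg_powr_slope a e u"
    using assms by (simp add: reg_powr_slope_def)
qed

lemma reg_powr_derivative_within_nonneg_bounds:
  fixes a e s :: real
  assumes "a > 0" "e > 0" "s \<ge> 0"
  shows "\<exists>D. (reg_powr a e has_real_derivative D) (at s within {0..}) \<and> 0 \<le> D \<and> D \<le> a + 1"
proof (cases "s = 0")
  case True
  then show ?thesis
    using assms has_real_derivative_reg_powr_at_0[of a e] by auto
next
  case False
  then have "s > 0"
    using assms by simp
  then show ?thesis
    using assms has_real_derivative_reg_powr[of e s a] reg_powr_slope_bounds[of a e "s powr a"]
    by (auto intro: has_field_derivative_at_within)
qed

lemma has_real_derivative_reg_powr_slope:
  fixes a e u :: real
  assumes "u + e \<noteq> 0"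
  shows "(reg_powr_slope a e has_real_derivative e * ((1 - a) * u + (a + 1) * e) / (u + e) ^ 3) (at u)"
proof -
  have "(reg_powr_slope a e has_real_derivative
      ((2 * u ^ 1 * 1 + (a + 1) * e * 1) * (u + e)\<^sup>2 - (u\<^sup>2 + (a + 1) * e * u) * (2 * (u + e) ^ 1 * (1 + 0)))
        / ((u + e)\<^sup>2)\<^sup>2) (at u)"
    unfolding reg_powr_slope_def
    by (rule derivative_eq_intros refl | use assms in simp)+
  moreover have "(2 * u ^ 1 * 1 + (a + 1) * e * 1) * (u + e)\<^sup>2 - (u\<^sup>2 + (a + 1) * e * u) * (2 * (u + e) ^ 1 * (1 + 0))
      = e * ((1 - a) * u + (a + 1) * e) * (u + e)"
    by (simp add: algebra_simps power2_eq_square)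
  moreover have "((u + e)\<^sup>2)\<^sup>2 = (u + e) ^ 3 * (u + e)"
    by algebra
  ultimately show ?thesis
    using assms by simp
qed

lemma has_real_derivative_deriv_reg_powr:
  fixes a e s :: real
  assumes "e > 0" "s > 0"
  shows "(deriv (reg_powr a e) has_real_derivative
           e * ((1 - a) * s powr a + (a + 1) * e) / (s powr a + e) ^ 3 * (a * s powr (a - 1))) (at s)"
proof -
  have "s powr a + e \<noteq> 0"
    using assms by (smt (verit) powr_ge_zero)
  then have chain: "((\<lambda>x. reg_powr_slope a e (x powr a)) has_real_derivative
           e * ((1 - a) * s powr a + (a + 1) * e) / (s powr a + e) ^ 3 * (a * s powr (a - 1))) (at s)"
    by (rule DERIV_chain2[OF has_real_derivative_reg_powr_slope has_real_derivative_powr[OF \<open>s > 0\<close>]])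
  have eq: "reg_powr_slope a e (x powr a) = deriv (reg_powr a e) x" if "x \<in> {0<..}" for x
    using that assms by (intro DERIV_imp_deriv[symmetric] has_real_derivative_reg_powr) auto
  show ?thesis
    by (rule has_field_derivative_transform_within_open[OF chain open_greaterThan _ eq]) (use assms in auto)
qed

lemma powr_mult_powr_le_square_sum:
  fixes u e p :: real
  assumes "u > 0" "e > 0" "1 \<le> p" "p \<le> 2"
  shows "u powr p * e powr (2 - p) \<le> 2 powr (p - 2) * (u + e)\<^sup>2"
proof -
  define t where "t = u + e"
  have t: "t > 0" "u \<le> t"
    using assms by (simp_all add: t_def)
  have "u * e \<le> t\<^sup>2 / 4"
    using sum_squares_ge_zero[of "u - e" 0] by (simp add: t_def power2_eq_square algebra_simps)
  have "u powr p * e powr (2 - p) = u powr (2 * p - 2) * (u * e) powr (2 - p)"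
    using assms by (simp add: powr_mult powr_add[symmetric])
  also have "\<dots> \<le> t powr (2 * p - 2) * (t\<^sup>2 / 4) powr (2 - p)"
    using assms t \<open>u * e \<le> t\<^sup>2 / 4\<close> by (intro mult_mono powr_mono2) auto
  also have "\<dots> = 4 powr (p - 2) * t\<^sup>2"
  proof -
    have split: "(t\<^sup>2 / 4) powr (2 - p) = t powr (2 * (2 - p)) * (1 / 4 powr (2 - p))"
      unfolding powr_numeral[OF less_imp_le[OF \<open>t > 0\<close>], symmetric] by (simp add: powr_divide powr_powr)
    have combine: "t powr (2 * p - 2) * t powr (2 * (2 - p)) = t\<^sup>2"
      using t by (simp add: powr_add[symmetric])
    have flip: "1 / 4 powr (2 - p) = (4::real) powr (p - 2)"
      by (simp add: powr_minus_divide[symmetric])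
    show ?thesis
      unfolding split mult.assoc[symmetric] combine flip by (rule mult.commute)
  qed
  also have "\<dots> \<le> 2 powr (p - 2) * t\<^sup>2"
    using assms by (intro mult_right_mono powr_mono2') auto
  finally show ?thesis
    by (simp add: t_def)
qed

lemma reg_powr_second_derivative_bound:
  fixes a e s :: real
  assumes "a \<ge> 1/2" "e > 0" "s > 0"
  shows "\<bar>e * ((1 - a) * s powr a + (a + 1) * e) / (s powr a + e) ^ 3 * (a * s powr (a - 1))\<bar>
           \<le> 2 powr (- (2 * a - 1) / (2 * a)) * a * (a + 1) * e powr (1 / (2 * a)) * s powr (- 3/2)"
proof -
  define u where "u = s powr a"
  define p where "p = 1 + 1 / (2 * a)"
  have u: "u > 0" "u + e > 0"
    using assms by (simp_all add: u_def add_pos_pos)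
  have p: "1 \<le> p" "p \<le> 2" "p - 2 = - (2 * a - 1) / (2 * a)" "p - 1 = 1 / (2 * a)"
    using assms by (auto simp: p_def field_simps)
  have "\<bar>(1 - a) * u + (a + 1) * e\<bar> \<le> (a + 1) * (u + e)"
    using assms u by (auto simp: abs_le_iff algebra_simps)
  then have "\<bar>e * ((1 - a) * u + (a + 1) * e) / (u + e) ^ 3 * (a * s powr (a - 1))\<bar>
      \<le> e * ((a + 1) * (u + e)) / (u + e) ^ 3 * (a * s powr (a - 1))"
    using assms u by (simp add: abs_mult divide_right_mono mult_right_mono)
  also have "\<dots> = a * (a + 1) * (e * s powr (a - 1)) / (u + e)\<^sup>2"
    using u by (simp add: power2_eq_square power3_eq_cube)
  also have "e * s powr (a - 1) = e powr (p - 1) * (u powr p * e powr (2 - p)) * s powr (- 3/2)"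
  proof -
    have "u powr p = s powr (a + 1/2)"
      using assms by (simp add: u_def p_def powr_powr algebra_simps)
    moreover have "s powr (a - 1) = s powr (a + 1/2) * s powr (- 3/2)"
      by (simp add: powr_add[symmetric])
    moreover have "e = e powr (p - 1) * e powr (2 - p)"
      using assms by (simp add: powr_add[symmetric])
    ultimately show ?thesis
      by (metis mult.assoc mult.commute)
  qed
  also have "a * (a + 1) * (e powr (p - 1) * (u powr p * e powr (2 - p)) * s powr (- 3/2)) / (u + e)\<^sup>2
      \<le> a * (a + 1) * (e powr (p - 1) * (2 powr (p - 2) * (u + e)\<^sup>2) * s powr (- 3/2)) / (u + e)\<^sup>2"
    using assms u p powr_mult_powr_le_square_sum[of u e p]
    by (intro divide_right_mono mult_left_mono mult_right_mono) auto
  also have "\<dots> = 2 powr (p - 2) * a * (a + 1) * e powr (p - 1) * s powr (- 3/2)"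
    using u by simp
  finally show ?thesis
    unfolding u_def p by simp
qed

theorem lemma6p1:
  fixes n \<epsilon> :: real
  assumes "0 \<le> n" and "n \<le> 7/2" and "\<epsilon> > 0"
  shows "(\<forall>s\<ge>0. 0 \<le> h_eps n \<epsilon> s \<and> h_eps n \<epsilon> s \<le> s)
       \<and> (\<forall>s\<ge>0. \<exists>D. (h_eps n \<epsilon> has_real_derivative D) (at s within {0..})
                      \<and> 0 \<le> D \<and> D \<le> 5 - n)
       \<and> (\<forall>s>0. \<exists>D2. (deriv (h_eps n \<epsilon>) has_real_derivative D2) (at s)
                      \<and> \<bar>D2\<bar> \<le> 2 powr (- (7 - 2*n) / (2 * (4 - n))) * (4 - n) * (5 - n)
                               * \<epsilon> powr (1 / (2 * (4 - n))) * s powr (- 3/2))"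
proof -
  define a where "a = 4 - n"
  have "a \<ge> 1/2" "a > 0"
    using assms by (simp_all add: a_def)
  have h: "h_eps n \<epsilon> = reg_powr a \<epsilon>"
    by (simp add: a_def h_eps_eq_reg_powr)
  have exponents: "4 - n = a" "5 - n = a + 1" "7 - 2 * n = 2 * a - 1"
    by (simp_all add: a_def)
  show ?thesis
    unfolding h exponents
    using reg_powr_bounds[OF \<open>\<epsilon> > 0\<close>]
      reg_powr_derivative_within_nonneg_bounds[OF \<open>a > 0\<close> \<open>\<epsilon> > 0\<close>]
      has_real_derivative_deriv_reg_powr[OF \<open>\<epsilon> > 0\<close>]
      reg_powr_second_derivative_bound[OF \<open>a \<ge> 1/2\<close> \<open>\<epsilon> > 0\<close>]
    by meson
qed

end
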